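(* The double star $S(2,2)$ is the unique smallest $\operatorname{IR}$-tree of diameter $3$: $S(2,2)$ is an $\operatorname{IR}$-graph, every tree of diameter $3$ that is an $\operatorname{IR}$-graph has at least $6$ vertices, and every such tree with exactly $6$ vertices is isomorphic to $S(2,2)$.
   Context: All graphs are finite and simple. For $G=(V,E)$, $D\subseteq V$, $v\in D$: $\operatorname{PN}(v,D)=N[v]-N[D-\{v\}]$ (closed neighbourhoods). $D$ is irredundant if $\operatorname{PN}(v,D)\neq\varnothing$ for all $v\in D$; $\operatorname{IR}(G)$ is the maximum size of an irredundant set; an $\operatorname{IR}(G)$-set is an irredundant set of that size. $G(\operatorname{IR})$ has the $\operatorname{IR}(G)$-sets as vertices, with $D\sim D'$ iff there exist $u\in D$, $v\in D'$ with $uv\in E(G)$ and $D'=(D-\{u\})\cup\{v\}$. A graph $H$ is an $\operatorname{IR}$-graph if $H\cong G(\operatorname{IR})$ for some graph $G$; an $\operatorname{IR}$-tree is a tree that is an $\operatorname{IR}$-graph. The double star $S(2,2)$ is the tree obtained by joining the centres of two copies of $K_{1,2}$ by an edge. *)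

theory Defs
  imports Main
begin

definition graph :: "'a set \<Rightarrow> 'a set set \<Rightarrow> bool" where
  "graph V E \<longleftrightarrow> finite V \<and> (\<forall>e\<in>E. e \<subseteq> V \<and> card e = 2)"

definition cnbhd :: "'a set set \<Rightarrow> 'a \<Rightarrow> 'a set" where
  "cnbhd E v = insert v {u. {u, v} \<in> E}"

definition cnbhd_set :: "'a set set \<Rightarrow> 'a set \<Rightarrow> 'a set" where
  "cnbhd_set E S = (\<Union>v\<in>S. cnbhd E v)"

definition PN :: "'a set set \<Rightarrow> 'a \<Rightarrow> 'a set \<Rightarrow> 'a set" where
  "PN E v D = cnbhd E v - cnbhd_set E (D - {v})"

definition irredundant :: "'a set \<Rightarrow> 'a set set \<Rightarrow> 'a set \<Rightarrow> bool" where
  "irredundant V E D \<longleftrightarrow> D \<subseteq> V \<and> (\<forall>v\<in>D. PN E v D \<noteq> {})"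

definition IR :: "'a set \<Rightarrow> 'a set set \<Rightarrow> nat" where
  "IR V E = Max {card D | D. irredundant V E D}"

definition IR_sets :: "'a set \<Rightarrow> 'a set set \<Rightarrow> 'a set set" where
  "IR_sets V E = {D. irredundant V E D \<and> card D = IR V E}"

definition IR_edges :: "'a set \<Rightarrow> 'a set set \<Rightarrow> 'a set set set" where
  "IR_edges V E = {{D, D'} | D D'. D \<in> IR_sets V E \<and> D' \<in> IR_sets V E \<and>
      (\<exists>u\<in>D. \<exists>v\<in>D'. {u, v} \<in> E \<and> D' = (D - {u}) \<union> {v})}"

definition graph_iso :: "'a set \<Rightarrow> 'a set set \<Rightarrow> 'b set \<Rightarrow> 'b set set \<Rightarrow> bool" where
  "graph_iso V E V' E' \<longleftrightarrow> (\<exists>f. bij_betw f V V' \<and>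
      (\<forall>u\<in>V. \<forall>v\<in>V. {u, v} \<in> E \<longleftrightarrow> {f u, f v} \<in> E'))"

(* Every finite graph is isomorphic to one with natural-number vertices, so
   quantifying over graphs on nat loses no generality. *)
definition is_IR_graph :: "'a set \<Rightarrow> 'a set set \<Rightarrow> bool" where
  "is_IR_graph V E \<longleftrightarrow> (\<exists>(W::nat set) F. graph W F \<and> graph_iso V E (IR_sets W F) (IR_edges W F))"

definition walk :: "'a set \<Rightarrow> 'a set set \<Rightarrow> 'a list \<Rightarrow> bool" where
  "walk V E xs \<longleftrightarrow> xs \<noteq> [] \<and> set xs \<subseteq> V \<and> (\<forall>i. Suc i < length xs \<longrightarrow> {xs ! i, xs ! Suc i} \<in> E)"

definition connected :: "'a set \<Rightarrow> 'a set set \<Rightarrow> bool" where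
  "connected V E \<longleftrightarrow> V \<noteq> {} \<and>
     (\<forall>u\<in>V. \<forall>v\<in>V. \<exists>xs. walk V E xs \<and> hd xs = u \<and> last xs = v)"

definition is_cycle :: "'a set \<Rightarrow> 'a set set \<Rightarrow> 'a list \<Rightarrow> bool" where
  "is_cycle V E xs \<longleftrightarrow> walk V E xs \<and> distinct xs \<and> length xs \<ge> 3 \<and> {last xs, hd xs} \<in> E"

definition acyclic_graph :: "'a set \<Rightarrow> 'a set set \<Rightarrow> bool" where
  "acyclic_graph V E \<longleftrightarrow> \<not> (\<exists>xs. is_cycle V E xs)"

definition tree :: "'a set \<Rightarrow> 'a set set \<Rightarrow> bool" where
  "tree V E \<longleftrightarrow> graph V E \<and> connected V E \<and> acyclic_graph V E"

definition gdist :: "'a set \<Rightarrow> 'a set set \<Rightarrow> 'a \<Rightarrow> 'a \<Rightarrow> nat" where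
  "gdist V E u v = (LEAST n. \<exists>xs. walk V E xs \<and> hd xs = u \<and> last xs = v \<and> length xs = Suc n)"

definition diameter :: "'a set \<Rightarrow> 'a set set \<Rightarrow> nat" where
  "diameter V E = Max {gdist V E u v | u v. u \<in> V \<and> v \<in> V}"

definition S22_V :: "nat set" where
  "S22_V = {0, 1, 2, 3, 4, 5}"

definition S22_E :: "nat set set" where
  "S22_E = {{0, 1}, {0, 2}, {0, 3}, {1, 4}, {1, 5}}"

end

theory Submission
  imports Defs
begin

text \<open>A tree of diameter \<open>3\<close> is a double star: two adjacent centres, every other vertex a leaf
  at one of them.  If both centres carry at least two leaves, the tree has at least six vertices
  and is \<open>S(2,2)\<close> when it has exactly six.  Otherwise it has a leaf \<open>C\<close> whose neighbour \<open>A\<close> has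
  degree two, the other neighbour \<open>B\<close> of \<open>A\<close> being adjacent to all remaining vertices, and this
  shape never occurs in an IR-graph.  The key tool is that replacing each vertex of an IR-set by a
  private neighbour gives an IR-set from which all non-isolated vertices of the original set have
  disappeared; as every IR-set is within two swaps of \<open>A\<close> and of \<open>B\<close>, at most two vertices of
  \<open>A\<close> or of \<open>B\<close> are non-isolated in any IR-set.  With this, a case analysis on the independence
  of \<open>A\<close>, \<open>B\<close>, \<open>C\<close> always produces an IR-set adjacent to \<open>A\<close> or \<open>C\<close> that is not allowed
  to exist.  Finally \<open>S(2,2)\<close> is the IR-graph of an explicit graph on six vertices.\<close>

lemma card_insert_Diff_swap:
  assumes "finite X" "u \<in> X" "v \<notin> X"
  shows "card (insert v (X - {u})) = card X"
  using assms card_Suc_Diff1[OF assms(1,2)] by simp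

lemma card_Diff_triangle:
  assumes "finite X" "finite Y"
  shows "card (X - Z) \<le> card (X - Y) + card (Y - Z)"
proof -
  have "card (X - Z) \<le> card ((X - Y) \<union> (Y - Z))"
    using assms by (intro card_mono) auto
  also have "\<dots> \<le> card (X - Y) + card (Y - Z)"
    by (rule card_Un_le)
  finally show ?thesis .
qed

lemma two_le_card: "finite S \<Longrightarrow> {a, b} \<subseteq> S \<Longrightarrow> a \<noteq> b \<Longrightarrow> 2 \<le> card S"
  by (metis card_2_iff card_mono)

lemma three_le_card: "finite S \<Longrightarrow> {a, b, c} \<subseteq> S \<Longrightarrow> distinct [a, b, c] \<Longrightarrow> 3 \<le> card S"
  by (metis card_mono distinct_card list.set(1,2) length_Cons list.size(3) numeral_3_eq_3)

lemma graph_edge_neq: "graph V E \<Longrightarrow> {u, v} \<in> E \<Longrightarrow> u \<noteq> v"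
  unfolding graph_def by fastforce

lemma graph_edge_in_V: "graph V E \<Longrightarrow> {u, v} \<in> E \<Longrightarrow> u \<in> V \<and> v \<in> V"
  unfolding graph_def by blast

section \<open>Irredundant sets and the IR-graph\<close>

locale simple_graph =
  fixes W :: "'v set" and F :: "'v set set"
  assumes graph: "graph W F"
begin

definition adj :: "'v \<Rightarrow> 'v \<Rightarrow> bool" where
  "adj u v \<longleftrightarrow> {u, v} \<in> F"

definition independent :: "'v set \<Rightarrow> bool" where
  "independent D \<longleftrightarrow> (\<forall>s\<in>D. \<forall>t\<in>D. \<not> adj s t)"

definition swap :: "'v set \<Rightarrow> 'v set \<Rightarrow> bool" where
  "swap X Y \<longleftrightarrow> (\<exists>u\<in>X. \<exists>v. v \<notin> X \<and> adj u v \<and> Y = insert v (X - {u}))"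

lemma finite_W: "finite W"
  using graph by (simp add: graph_def)

lemma adj_commute: "adj u v \<longleftrightarrow> adj v u"
  by (simp add: adj_def insert_commute)

lemma adj_irrefl: "\<not> adj u u"
  using graph by (auto simp: adj_def graph_def)

lemma adj_neq: "adj u v \<Longrightarrow> u \<noteq> v"
  using adj_irrefl by blast

lemma adj_in_W: "adj u v \<Longrightarrow> u \<in> W \<and> v \<in> W"
  using graph by (auto simp: adj_def graph_def)

lemma mem_PN_iff:
  "w \<in> PN F v D \<longleftrightarrow> (w = v \<or> adj w v) \<and> (\<forall>t\<in>D - {v}. w \<noteq> t \<and> \<not> adj w t)"
  by (auto simp: PN_def cnbhd_set_def cnbhd_def adj_def)

lemma PN_self_iff: "v \<in> PN F v D \<longleftrightarrow> (\<forall>t\<in>D - {v}. v \<noteq> t \<and> \<not> adj v t)"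
  by (simp add: mem_PN_iff)

lemma PN_I:
  "w = v \<or> adj w v \<Longrightarrow> (\<And>t. t \<in> D \<Longrightarrow> t \<noteq> v \<Longrightarrow> w \<noteq> t \<and> \<not> adj w t) \<Longrightarrow> w \<in> PN F v D"
  by (simp add: mem_PN_iff)

lemma PN_elsewhere: "w \<in> PN F v D \<Longrightarrow> t \<in> D \<Longrightarrow> t \<noteq> v \<Longrightarrow> w \<noteq> t \<and> \<not> adj w t \<and> \<not> adj t w"
  by (auto simp: mem_PN_iff adj_commute)

lemma PN_of_nonisolated:
  assumes "w \<in> PN F v D" "v \<in> D" "t \<in> D" "adj v t"
  shows "w \<notin> D" "adj w v"
  using assms adj_irrefl by (auto simp: mem_PN_iff adj_commute)

lemma finite_irredundant_cards: "finite {card D |D. irredundant W F D}"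
proof -
  have "card D \<le> card W" if "irredundant W F D" for D
    using that finite_W by (simp add: irredundant_def card_mono)
  then have "{card D |D. irredundant W F D} \<subseteq> {..card W}"
    by blast
  then show ?thesis
    using finite_subset by blast
qed

lemma card_le_IR: "irredundant W F D \<Longrightarrow> card D \<le> IR W F"
  unfolding IR_def using finite_irredundant_cards by (intro Max_ge) blast+

lemma IR_attained: "\<exists>D. irredundant W F D \<and> card D = IR W F"
proof -
  have "irredundant W F {}"
    by (simp add: irredundant_def)
  then have "IR W F \<in> {card D |D. irredundant W F D}"
    unfolding IR_def using finite_irredundant_cards by (intro Max_in) blast+
  then show ?thesis
    by auto
qed

lemma IR_setsD:
  assumes "D \<in> IR_sets W F"
  shows "D \<subseteq> W" "finite D" "card D = IR W F" "\<And>v. v \<in> D \<Longrightarrow> PN F v D \<noteq> {}"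
  using assms finite_subset[OF _ finite_W] by (auto simp: IR_sets_def irredundant_def)

lemma IR_setI:
  "D \<subseteq> W \<Longrightarrow> card D = IR W F \<Longrightarrow> (\<And>q. q \<in> D \<Longrightarrow> \<exists>w. w \<in> PN F q D) \<Longrightarrow> D \<in> IR_sets W F"
  unfolding IR_sets_def irredundant_def by blast

lemma independent_irredundant: "D \<subseteq> W \<Longrightarrow> independent D \<Longrightarrow> irredundant W F D"
proof -
  assume "D \<subseteq> W" "independent D"
  then have "v \<in> PN F v D" if "v \<in> D" for v
    using that unfolding independent_def PN_self_iff by blast
  with \<open>D \<subseteq> W\<close> show ?thesis
    unfolding irredundant_def by blast
qed

lemma independent_card_le_IR: "D \<subseteq> W \<Longrightarrow> independent D \<Longrightarrow> card D \<le> IR W F"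
  by (simp add: card_le_IR independent_irredundant)

lemma independent_Diff: "independent X \<Longrightarrow> independent (X - Y)"
  by (simp add: independent_def)

lemma independent_insert_PN:
  assumes "independent (X - {z})" "p \<in> PN F z X"
  shows "independent (insert p (X - {z}))"
  using assms adj_irrefl unfolding independent_def by (auto simp: mem_PN_iff adj_commute)

lemma independent_IR_set_dominates:
  assumes "X \<in> IR_sets W F" "independent X" "b \<in> W - X"
  shows "\<exists>t\<in>X. adj b t"
proof (rule ccontr)
  assume "\<not> (\<exists>t\<in>X. adj b t)"
  then have "independent (insert b X)"
    using assms(2) adj_irrefl unfolding independent_def by (auto simp: adj_commute)
  then have "card (insert b X) \<le> IR W F"
    using assms IR_setsD(1) by (intro independent_card_le_IR) auto
  then show False
    using assms IR_setsD(2,3) by simp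
qed

lemma swapI: "u \<in> X \<Longrightarrow> v \<notin> X \<Longrightarrow> adj u v \<Longrightarrow> swap X (insert v (X - {u}))"
  unfolding swap_def by blast

lemma swapE:
  assumes "swap X Y"
  obtains u v where "u \<in> X" "v \<notin> X" "adj u v" "Y = insert v (X - {u})"
  using assms unfolding swap_def by blast

lemma swap_sym: "swap X Y \<Longrightarrow> swap Y X"
proof -
  assume "swap X Y"
  then obtain u v where uv: "u \<in> X" "v \<notin> X" "adj u v" and Y: "Y = insert v (X - {u})"
    by (rule swapE)
  then have "swap Y (insert u (Y - {v}))"
    using adj_neq by (intro swapI) (auto simp: adj_commute)
  moreover have "insert u (Y - {v}) = X"
    using uv Y by auto
  ultimately show "swap Y X"
    by simp
qed

lemma card_Diff_swap: "swap X Y \<Longrightarrow> card (X - Y) = 1"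
proof -
  assume "swap X Y"
  then obtain u v where "u \<in> X" "adj u v" "Y = insert v (X - {u})"
    unfolding swap_def by blast
  then have "X - Y = {u}"
    using adj_irrefl by auto
  then show ?thesis by simp
qed

lemma IR_edges_iff_swap:
  assumes "X \<in> IR_sets W F" "Y \<in> IR_sets W F"
  shows "{X, Y} \<in> IR_edges W F \<longleftrightarrow> swap X Y"
proof -
  have swap_if: "swap P Q"
    if "P \<in> IR_sets W F" "Q \<in> IR_sets W F" "u \<in> P" "{u, v} \<in> F" "Q = (P - {u}) \<union> {v}" for P Q u v
  proof -
    have "v \<notin> P"
    proof
      assume "v \<in> P"
      then have "Q = P - {u}"
        using that adj_irrefl by (auto simp: adj_def)
      then have "card Q = card P - 1" "card P > 0"
        using that IR_setsD(2) by (auto simp: card_gt_0_iff)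
      then show False
        using that IR_setsD(3) by simp
    qed
    then show ?thesis
      using that by (auto simp: swap_def adj_def)
  qed
  show ?thesis
  proof
    assume "{X, Y} \<in> IR_edges W F"
    then show "swap X Y"
      unfolding IR_edges_def using swap_if swap_sym by (auto simp: doubleton_eq_iff)
  next
    assume "swap X Y"
    then show "{X, Y} \<in> IR_edges W F"
      unfolding IR_edges_def swap_def adj_def using assms by blast
  qed
qed

lemma swap_IR_setI:
  assumes X: "X \<in> IR_sets W F" and "u \<in> X" "v \<notin> X" "adj u v"
    and irr: "\<And>q. q \<in> insert v (X - {u}) \<Longrightarrow> \<exists>w. w \<in> PN F q (insert v (X - {u}))"
  shows "insert v (X - {u}) \<in> IR_sets W F" "swap X (insert v (X - {u}))"
proof -
  have "insert v (X - {u}) \<subseteq> W"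
    using IR_setsD(1)[OF X] adj_in_W[OF \<open>adj u v\<close>] by blast
  moreover have "card (insert v (X - {u})) = IR W F"
    using card_insert_Diff_swap[OF IR_setsD(2)[OF X] assms(2,3)] IR_setsD(3)[OF X] by simp
  ultimately show "insert v (X - {u}) \<in> IR_sets W F"
    using irr by (rule IR_setI)
  show "swap X (insert v (X - {u}))"
    using assms by (intro swapI)
qed

lemma independent_swap_IR_setI:
  assumes "X \<in> IR_sets W F" "u \<in> X" "v \<notin> X" "adj u v" "independent (insert v (X - {u}))"
  shows "insert v (X - {u}) \<in> IR_sets W F" "swap X (insert v (X - {u}))"
proof -
  have "q \<in> PN F q (insert v (X - {u}))" if "q \<in> insert v (X - {u})" for q
    using assms(5) that unfolding independent_def PN_self_iff by blast
  then show "insert v (X - {u}) \<in> IR_sets W F" "swap X (insert v (X - {u}))"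
    using swap_IR_setI[OF assms(1-4)] by blast+
qed

definition private_choice :: "'v set \<Rightarrow> 'v \<Rightarrow> 'v" where
  "private_choice X s = (SOME w. w \<in> PN F s X)"

definition private_image :: "'v set \<Rightarrow> 'v set" where
  "private_image X = private_choice X ` X"

definition nonisolated :: "'v set \<Rightarrow> 'v set" where
  "nonisolated X = {s \<in> X. \<exists>t\<in>X. adj s t}"

lemma private_choice_PN: "X \<in> IR_sets W F \<Longrightarrow> s \<in> X \<Longrightarrow> private_choice X s \<in> PN F s X"
proof -
  assume "X \<in> IR_sets W F" "s \<in> X"
  then obtain w where "w \<in> PN F s X"
    using IR_setsD(4) by blast
  then show ?thesis
    unfolding private_choice_def by (rule someI)
qed

lemma private_choice_nonisolated:
  assumes "X \<in> IR_sets W F" "s \<in> X" "t \<in> X" "adj s t"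
  shows "private_choice X s \<notin> X" "adj (private_choice X s) s"
  using PN_of_nonisolated[OF private_choice_PN] assms by blast+

text \<open>Replacing every vertex of an IR-set by a chosen private neighbour yields an IR-set, since
  each vertex is in turn a private neighbour of its replacement.\<close>
lemma PN_private_image:
  assumes X: "X \<in> IR_sets W F" and s: "s \<in> X"
  shows "s \<in> PN F (private_choice X s) (private_image X)"
proof (rule PN_I)
  show "s = private_choice X s \<or> adj s (private_choice X s)"
    using private_choice_PN[OF X s] by (auto simp: mem_PN_iff adj_commute)
  fix q assume "q \<in> private_image X" "q \<noteq> private_choice X s"
  then obtain t where "t \<in> X" "t \<noteq> s" "q = private_choice X t"
    unfolding private_image_def by blast
  then show "s \<noteq> q \<and> \<not> adj s q"
    using PN_elsewhere[OF private_choice_PN[OF X \<open>t \<in> X\<close>] s] by blast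
qed

lemma private_image_IR_set:
  assumes X: "X \<in> IR_sets W F"
  shows "private_image X \<in> IR_sets W F"
proof -
  have "inj_on (private_choice X) X"
  proof (rule inj_onI)
    fix s t assume "s \<in> X" "t \<in> X" "private_choice X s = private_choice X t"
    then have "private_choice X s \<in> PN F s X" "private_choice X s \<in> PN F t X"
      using private_choice_PN[OF X] by metis+
    then show "s = t"
      using \<open>s \<in> X\<close> \<open>t \<in> X\<close> by (auto simp: mem_PN_iff)
  qed
  then have "card (private_image X) = IR W F"
    unfolding private_image_def using card_image IR_setsD(3)[OF X] by metis
  moreover have "private_image X \<subseteq> W"
  proof
    fix q assume "q \<in> private_image X"
    then obtain t where "t \<in> X" "q \<in> PN F t X"
      unfolding private_image_def using private_choice_PN[OF X] by blast
    then show "q \<in> W"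
      using IR_setsD(1)[OF X] adj_in_W by (auto simp: mem_PN_iff)
  qed
  moreover have "PN F q (private_image X) \<noteq> {}" if "q \<in> private_image X" for q
    using that PN_private_image[OF X] unfolding private_image_def by blast
  ultimately show ?thesis
    unfolding IR_sets_def irredundant_def by blast
qed

lemma nonisolated_Int_private_image:
  assumes X: "X \<in> IR_sets W F"
  shows "nonisolated X \<inter> private_image X = {}"
proof -
  have "s \<noteq> private_choice X s'" if "s \<in> X" "t \<in> X" "adj s t" "s' \<in> X" for s t s'
  proof (cases "s' = s")
    case True
    then show ?thesis
      using PN_of_nonisolated(1)[OF private_choice_PN[OF X that(1)] that(1-3)] that(1) by auto
  next
    case False
    then show ?thesis
      using PN_elsewhere[OF private_choice_PN[OF X that(4)] that(1)] by auto
  qed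
  then show ?thesis
    unfolding nonisolated_def private_image_def by blast
qed

end

section \<open>A configuration that does not occur in IR-graphs\<close>

text \<open>The shape of \<open>G(IR)\<close> near a centre of a diameter-3 tree that carries a single leaf:
  \<open>C\<close> is pendant at \<open>A\<close>, \<open>A\<close> is adjacent only to \<open>B\<close> and \<open>C\<close>, and every other vertex is
  adjacent to \<open>B\<close>.\<close>
locale pendant_config = simple_graph W F for W :: "'v set" and F +
  fixes A B C :: "'v set"
  assumes A: "A \<in> IR_sets W F" and B: "B \<in> IR_sets W F" and C: "C \<in> IR_sets W F"
    and B_neq_C: "B \<noteq> C" and swap_A_B: "swap A B" and swap_A_C: "swap A C"
    and swap_C_eq_A: "\<And>X. X \<in> IR_sets W F \<Longrightarrow> swap C X \<Longrightarrow> X = A"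
    and swap_A_eq_B_or_C: "\<And>X. X \<in> IR_sets W F \<Longrightarrow> swap A X \<Longrightarrow> X = B \<or> X = C"
    and IR_sets_near_B: "\<And>X. X \<in> IR_sets W F \<Longrightarrow> X = A \<or> X = B \<or> X = C \<or> swap B X"
begin

lemma finite_A: "finite A" and finite_B: "finite B"
  using IR_setsD(2) A B by blast+

lemma card_Diff_A_le_2: "P \<in> IR_sets W F \<Longrightarrow> card (A - P) \<le> 2"
  using IR_sets_near_B card_Diff_triangle[OF finite_A finite_B, of P]
    card_Diff_swap[OF swap_A_B] card_Diff_swap[OF swap_A_C] card_Diff_swap
  by fastforce

lemma card_Diff_B_le_2: "P \<in> IR_sets W F \<Longrightarrow> card (B - P) \<le> 2"
  using IR_sets_near_B card_Diff_triangle[OF finite_B finite_A, of C]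
    card_Diff_swap[OF swap_sym[OF swap_A_B]] card_Diff_swap[OF swap_A_C] card_Diff_swap
  by fastforce

lemma far_from_B_imp_C: "P \<in> IR_sets W F \<Longrightarrow> 2 \<le> card (B - P) \<Longrightarrow> P = C"
  using IR_sets_near_B card_Diff_swap[OF swap_sym[OF swap_A_B]] card_Diff_swap by fastforce

text \<open>Passing to \<open>private_image X\<close> moves every non-isolated vertex of \<open>X\<close> out of the set,
  so the distance bounds above limit the number of such vertices in \<open>A\<close> and \<open>B\<close>.\<close>
lemma card_A_Int_nonisolated_le_2: "X \<in> IR_sets W F \<Longrightarrow> card (A \<inter> nonisolated X) \<le> 2"
  using card_mono[OF finite_Diff[OF finite_A], of "A \<inter> nonisolated X" "private_image X"]
    nonisolated_Int_private_image card_Diff_A_le_2[OF private_image_IR_set] by fastforce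

lemma card_B_Int_nonisolated_le_2: "X \<in> IR_sets W F \<Longrightarrow> card (B \<inter> nonisolated X) \<le> 2"
  using card_mono[OF finite_Diff[OF finite_B], of "B \<inter> nonisolated X" "private_image X"]
    nonisolated_Int_private_image card_Diff_B_le_2[OF private_image_IR_set] by fastforce

lemma A_neq_B: "A \<noteq> B"
  using card_Diff_swap[OF swap_A_B] by auto

lemma swap_C_at_private_neighbour:
  assumes iC: "independent C" and z: "z \<in> C" and y: "y \<notin> C" "y \<in> PN F z C"
  shows "insert y (C - {z}) = A"
proof -
  have "adj z y"
    using z y by (auto simp: mem_PN_iff adj_commute)
  moreover have "independent (insert y (C - {z}))"
    using independent_insert_PN[OF independent_Diff[OF iC] y(2)] .
  ultimately show ?thesis
    using independent_swap_IR_setI[OF C z y(1)] swap_C_eq_A by blast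
qed

lemma independent_B_if_independent_C:
  assumes iC: "independent C"
  shows "independent B"
proof (rule ccontr)
  assume "\<not> independent B"
  then obtain s t where st: "s \<in> B" "t \<in> B" "adj s t"
    unfolding independent_def by blast
  then have "s \<in> nonisolated B" "t \<in> nonisolated B"
    unfolding nonisolated_def by (auto simp: adj_commute)
  then have "{s, t} \<subseteq> B - private_image B"
    using nonisolated_Int_private_image[OF B] st by blast
  then have "private_image B = C"
    using far_from_B_imp_C[OF private_image_IR_set[OF B]] two_le_card[OF finite_Diff[OF finite_B]]
      adj_neq[OF st(3)] by blast
  have A_eq: "insert r (C - {private_choice B r}) = A" if "r \<in> B" "r \<notin> C" for r
  proof -
    have "private_choice B r \<in> C" "r \<in> PN F (private_choice B r) C"
      using PN_private_image[OF B that(1)] \<open>private_image B = C\<close> that(1)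
      unfolding private_image_def by auto
    then show ?thesis
      using swap_C_at_private_neighbour[OF iC _ that(2)] by blast
  qed
  have "s \<notin> C" "t \<notin> C"
    using \<open>{s, t} \<subseteq> B - private_image B\<close> \<open>private_image B = C\<close> by auto
  then have "s \<in> insert t (C - {private_choice B t})"
    using A_eq[of s] A_eq[of t] st by blast
  then show False
    using \<open>s \<notin> C\<close> adj_neq[OF st(3)] by blast
qed

lemma new_vertex_of_A_in_B:
  assumes iC: "independent C" and iB: "independent B"
    and x: "x \<in> C" and a: "a \<notin> C" and A_eq: "A = insert a (C - {x})"
  shows "a \<in> B"
proof (rule ccontr)
  assume "a \<notin> B"
  obtain v b where v: "v \<in> A" and b: "b \<notin> A" "adj v b" and B_eq: "B = insert b (A - {v})"
    using swap_A_B by (rule swapE)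
  have "v = a"
    using \<open>a \<notin> B\<close> B_eq A_eq by auto
  then have B_eq': "B = insert b (C - {x})"
    using A_eq B_eq a by auto
  then have "b \<noteq> x"
    using x B_neq_C by auto
  then have bC: "b \<notin> C" and bB: "b \<in> B"
    using b(1) A_eq B_eq' by auto
  obtain t where t: "t \<in> C" "adj b t"
    using independent_IR_set_dominates[OF C iC] bC adj_in_W[OF b(2)] by blast
  have nonadj: "\<not> adj b t'" if "t' \<in> C" "t' \<noteq> x" for t'
    using iB bB B_eq' that unfolding independent_def by blast
  then have "adj b x"
    using t by metis
  with nonadj have "b \<in> PN F x C"
    using bC by (intro PN_I) blast+
  then have "A = B"
    using swap_C_at_private_neighbour[OF iC x bC] B_eq' by simp
  then show False
    using A_neq_B by simp
qed

lemma swap_of_C_removes_x: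
  assumes x: "x \<in> C" and a: "a \<notin> C" and A_eq: "A = insert a (C - {x})"
    and z: "z \<in> C" and y: "y \<notin> C" "adj z y"
    and irr: "\<And>q. q \<in> insert y (C - {z}) \<Longrightarrow> \<exists>w. w \<in> PN F q (insert y (C - {z}))"
  shows "z = x"
proof (rule ccontr)
  assume "z \<noteq> x"
  have "insert y (C - {z}) = A"
    using swap_IR_setI[OF C z y irr] swap_C_eq_A by blast
  moreover have "x \<in> insert y (C - {z})" "x \<notin> A"
    using x a \<open>z \<noteq> x\<close> A_eq y(2) adj_neq by auto
  ultimately show False
    by simp
qed

lemma private_new_vertex_of_A_impossible:
  assumes iC: "independent C" and iB: "independent B"
    and x: "x \<in> C" and a: "a \<notin> C" and A_eq: "A = insert a (C - {x})"
    and aB: "a \<in> B" and a_private: "a \<in> PN F x C"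
  shows False
proof -
  obtain v b where v: "v \<in> A" and b: "b \<notin> A" "adj v b" and B_eq: "B = insert b (A - {v})"
    using swap_A_B by (rule swapE)
  have "v \<noteq> a"
    using aB B_eq b(1) A_eq by auto
  then have vC: "v \<in> C" "v \<noteq> x"
    using v A_eq by auto
  have "b \<noteq> x"
    using iC vC(1) x b(2) unfolding independent_def by blast
  then have bC: "b \<notin> C"
    using b(1) A_eq by auto
  let ?Q = "insert b (C - {v})"
  have C_nonadj: "\<not> adj s t" if "s \<in> C" "t \<in> C" for s t
    using iC that unfolding independent_def by blast
  have B_nonadj: "\<not> adj s t" if "s \<in> B" "t \<in> B" for s t
    using iB that unfolding independent_def by blast
  have "\<exists>w. w \<in> PN F q ?Q" if q: "q \<in> ?Q" for q
  proof -
    consider "q = b" | "q = x" | "q \<in> C" "q \<in> B" "q \<noteq> x" "q \<noteq> v"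
      using q vC A_eq B_eq by auto
    then show ?thesis
    proof cases
      case 1
      have "v \<in> PN F q ?Q"
        using 1 b(2) C_nonadj vC(1) bC by (intro PN_I) auto
      then show ?thesis ..
    next
      case 2
      have "?Q - {x} \<subseteq> B" "a \<notin> ?Q" "adj a x"
        using A_eq B_eq a b(1) a_private x by (auto simp: mem_PN_iff)
      then have "a \<in> PN F q ?Q"
        using 2 B_nonadj aB by (intro PN_I) blast+
      then show ?thesis ..
    next
      case 3
      have "q \<in> PN F q ?Q"
        using 3 C_nonadj B_nonadj B_eq by (intro PN_I) auto
      then show ?thesis ..
    qed
  qed
  then show False
    using swap_of_C_removes_x[OF x a A_eq vC(1) bC b(2)] vC(2) by blast
qed

lemma neighbour_in_C_of_new_vertex_of_A_unique:
  assumes x: "x \<in> C" and a: "a \<notin> C" and A_eq: "A = insert a (C - {x})"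
    and z: "z \<in> C" "z \<noteq> x" "adj a z" and z': "z' \<in> C" "z' \<noteq> x" "adj a z'"
  shows "z' = z"
proof (rule ccontr)
  assume "z' \<noteq> z"
  moreover have "{a, z, z'} \<subseteq> A \<inter> nonisolated A"
    using z z' A_eq unfolding nonisolated_def by (auto simp: adj_commute)
  moreover have "a \<noteq> z" "a \<noteq> z'"
    using a z z' by auto
  ultimately show False
    using three_le_card[of "A \<inter> nonisolated A" a z z'] card_A_Int_nonisolated_le_2[OF A] finite_A
    by auto
qed

lemma nonprivate_new_vertex_of_A_impossible:
  assumes iC: "independent C" and x: "x \<in> C" and a: "a \<notin> C" "adj x a"
    and A_eq: "A = insert a (C - {x})" and a_nonprivate: "a \<notin> PN F x C"
  shows False
proof -
  have C_nonadj: "\<not> adj s t" if "s \<in> C" "t \<in> C" for s t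
    using iC that unfolding independent_def by blast
  obtain z where z: "z \<in> C" "z \<noteq> x" "adj a z"
    using a a_nonprivate by (auto simp: mem_PN_iff adj_commute)
  have aA: "a \<in> A" and zA: "z \<in> A"
    using A_eq z by auto
  obtain p where p_private: "p \<in> PN F z A"
    using IR_setsD(4)[OF A zA] by blast
  have pA: "p \<notin> A" and "adj z p"
    using PN_of_nonisolated[OF p_private zA aA] z(3) by (auto simp: adj_commute)
  then have "p \<noteq> x"
    using C_nonadj x z(1) by blast
  then have pC: "p \<notin> C"
    using pA A_eq by auto
  have "\<not> adj a p"
    using PN_elsewhere[OF p_private aA] z a by auto
  let ?Q = "insert p (C - {z})"
  have "\<exists>w. w \<in> PN F q ?Q" if q: "q \<in> ?Q" for q
  proof -
    consider "q = p" | "q = x" | "q \<in> C" "q \<noteq> x" "q \<noteq> z"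
      using q z by blast
    then show ?thesis
    proof cases
      case 1
      have "z \<in> PN F q ?Q"
        using 1 \<open>adj z p\<close> C_nonadj z(1) by (intro PN_I) (auto simp: adj_commute)
      then show ?thesis ..
    next
      case 2
      have "a \<in> PN F q ?Q"
        using 2 a pA \<open>\<not> adj a p\<close> neighbour_in_C_of_new_vertex_of_A_unique[OF x a(1) A_eq z] aA
        by (intro PN_I) (auto simp: adj_commute)
      then show ?thesis ..
    next
      case 3
      have "q \<in> A" "q \<noteq> z"
        using 3 A_eq by auto
      then have "q \<in> PN F q ?Q"
        using 3 PN_elsewhere[OF p_private] C_nonadj pC by (intro PN_I) auto
      then show ?thesis ..
    qed
  qed
  then show False
    using swap_of_C_removes_x[OF x a(1) A_eq z(1) pC \<open>adj z p\<close>] z(2) by blast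
qed

lemma not_independent_C: "\<not> independent C"
proof
  assume iC: "independent C"
  obtain x a where x: "x \<in> C" and a: "a \<notin> C" "adj x a" and A_eq: "A = insert a (C - {x})"
    using swap_sym[OF swap_A_C] by (rule swapE)
  have iB: "independent B"
    using independent_B_if_independent_C[OF iC] .
  show False
  proof (cases "a \<in> PN F x C")
    case True
    then show False
      using private_new_vertex_of_A_impossible[OF iC iB x a(1) A_eq]
        new_vertex_of_A_in_B[OF iC iB x a(1) A_eq] by blast
  next
    case False
    then show False
      using nonprivate_new_vertex_of_A_impossible[OF iC x a A_eq] by blast
  qed
qed

lemma nonisolated_A_subset_edge:
  assumes yz: "y \<in> A" "z \<in> A" "adj y z"
  shows "nonisolated A \<subseteq> {y, z}"
proof
  fix s assume s: "s \<in> nonisolated A"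
  show "s \<in> {y, z}"
  proof (rule ccontr)
    assume "s \<notin> {y, z}"
    moreover have "{s, y, z} \<subseteq> A \<inter> nonisolated A"
      using s yz unfolding nonisolated_def by (auto simp: adj_commute)
    ultimately show False
      using three_le_card[of "A \<inter> nonisolated A" s y z] card_A_Int_nonisolated_le_2[OF A] finite_A
        adj_neq[OF yz(3)] by auto
  qed
qed

text \<open>By the previous lemma \<open>yz\<close> is the only edge inside \<open>A\<close>, so exchanging one of its ends
  for a private neighbour leaves an independent set.\<close>
lemma swap_A_at_edge:
  assumes yz: "y \<in> A" "z \<in> A" "adj y z" and u: "u \<in> {y, z}" and p: "p \<in> PN F u A"
  shows "insert p (A - {u}) \<in> {B, C}" "independent (insert p (A - {u}))"
proof -
  have "\<not> adj s t" if "s \<in> A - {u}" "t \<in> A - {u}" for s t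
  proof
    assume "adj s t"
    then have "s \<in> {y, z}" "t \<in> {y, z}"
      using that nonisolated_A_subset_edge[OF yz] adj_commute unfolding nonisolated_def by blast+
    then show False
      using that u \<open>adj s t\<close> adj_neq by blast
  qed
  then show ind: "independent (insert p (A - {u}))"
    using independent_insert_PN p unfolding independent_def by blast
  have uA: "u \<in> A" and "\<exists>t\<in>A. adj u t"
    using u yz adj_commute by blast+
  then have "p \<notin> A" "adj u p"
    using PN_of_nonisolated[OF p] adj_commute by blast+
  then show "insert p (A - {u}) \<in> {B, C}"
    using independent_swap_IR_setI[OF A uA _ _ ind] swap_A_eq_B_or_C by blast
qed

lemma independent_A: "independent A"
proof (rule ccontr)
  assume "\<not> independent A"
  then obtain y z where yz: "y \<in> A" "z \<in> A" "adj y z"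
    unfolding independent_def by blast
  obtain p q where p: "p \<in> PN F z A" and q: "q \<in> PN F y A"
    using IR_setsD(4)[OF A] yz by blast
  have "q \<notin> A"
    using PN_of_nonisolated(1)[OF q yz(1,2,3)] .
  then have "y \<in> insert p (A - {z})" "y \<notin> insert q (A - {y})"
    using yz adj_neq by auto
  then have "insert p (A - {z}) \<noteq> insert q (A - {y})"
    by blast
  then have "independent C"
    using swap_A_at_edge[OF yz _ p] swap_A_at_edge[OF yz _ q] B_neq_C by auto
  then show False
    using not_independent_C by simp
qed

lemma A_nonadj: "s \<in> A \<Longrightarrow> t \<in> A \<Longrightarrow> \<not> adj s t"
  using independent_A unfolding independent_def by blast

text \<open>Swapping \<open>x\<close> for \<open>c\<close> in \<open>A\<close> keeps an IR-set when \<open>b\<close> can take over as private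
  neighbour of the only other vertex \<open>z\<close> that \<open>c\<close> might dominate.\<close>
lemma IR_set_swap_with_substitute:
  assumes "x \<in> A" "z \<in> A" "x \<noteq> z" "c \<notin> A" "adj x c" "adj z b" "b \<notin> A" "b \<noteq> c" "\<not> adj b c"
    and outside: "\<And>r. r \<in> A - {x, z} \<Longrightarrow> \<not> adj c r \<and> \<not> adj b r"
  shows "insert c (A - {x}) \<in> IR_sets W F"
proof -
  have "\<exists>w. w \<in> PN F q (insert c (A - {x}))" if q: "q \<in> insert c (A - {x})" for q
  proof -
    consider "q = c" | "q = z" | "q \<in> A - {x, z}"
      using q by blast
    then show ?thesis
    proof cases
      case 1
      have "x \<in> PN F q (insert c (A - {x}))"
        using 1 assms(1,5) A_nonadj by (intro PN_I) (auto simp: adj_commute)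
      then show ?thesis ..
    next
      case 2
      have "b \<in> PN F q (insert c (A - {x}))"
        using 2 assms(6-9) outside by (intro PN_I) (auto simp: adj_commute)
      then show ?thesis ..
    next
      case 3
      have "q \<in> PN F q (insert c (A - {x}))"
        using 3 outside[of q] A_nonadj by (intro PN_I) (auto simp: adj_commute)
      then show ?thesis ..
    qed
  qed
  then show ?thesis
    using swap_IR_setI(1)[OF A assms(1,4,5)] by blast
qed

lemma edge_of_B_at_new_vertex:
  assumes "\<not> independent B" and z: "z \<in> A" and b: "b \<notin> A" and B_eq: "B = insert b (A - {z})"
  obtains x where "x \<in> A" "x \<noteq> z" "adj b x" "\<And>r. r \<in> A - {x, z} \<Longrightarrow> \<not> adj b r"
proof -
  obtain x where x: "x \<in> A" "x \<noteq> z" "adj b x"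
    using assms A_nonadj B_eq adj_irrefl unfolding independent_def by (auto simp: adj_commute)
  have "\<not> adj b r" if "r \<in> A - {x, z}" for r
  proof
    assume "adj b r"
    then have "{b, x, r} \<subseteq> B \<inter> nonisolated B"
      using that x B_eq unfolding nonisolated_def by (auto simp: adj_commute)
    then show False
      using three_le_card[of "B \<inter> nonisolated B" b x r] card_B_Int_nonisolated_le_2[OF B] finite_B
        that b x by auto
  qed
  then show thesis
    using that x by blast
qed

context
  fixes z b x c
  assumes z: "z \<in> A" and b: "b \<notin> A" "adj z b" and B_eq: "B = insert b (A - {z})"
    and x: "x \<in> A" "x \<noteq> z" "adj b x" and b_nonadj: "\<And>r. r \<in> A - {x, z} \<Longrightarrow> \<not> adj b r"
    and c_private: "c \<in> PN F x B"
begin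

lemma private_neighbour_of_x:
  shows "c \<notin> A" "c \<noteq> z" "adj x c" "b \<noteq> c" "\<not> adj b c" "\<And>r. r \<in> A - {x, z} \<Longrightarrow> \<not> adj c r"
proof -
  have bB: "b \<in> B" and xB: "x \<in> B"
    using B_eq x by auto
  have "c \<notin> B" "adj c x"
    using PN_of_nonisolated[OF c_private xB bB] x(3) by (auto simp: adj_commute)
  then show "c \<noteq> z" "adj x c"
    using A_nonadj z x(1) adj_commute by blast+
  then show "c \<notin> A"
    using \<open>c \<notin> B\<close> B_eq by auto
  show "b \<noteq> c" "\<not> adj b c"
    using PN_elsewhere[OF c_private bB] b(1) x(1) \<open>c \<notin> B\<close> bB by (auto simp: adj_commute)
  show "\<not> adj c r" if "r \<in> A - {x, z}" for r
    using PN_elsewhere[OF c_private, of r] that B_eq by (auto simp: adj_commute)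
qed

lemma C_eq_swap_at_x: "C = insert c (A - {x})"
proof -
  have P: "insert c (A - {x}) \<in> IR_sets W F"
    using IR_set_swap_with_substitute[OF x(1) z x(2)] private_neighbour_of_x b b_nonadj by blast
  have "{b, x} \<subseteq> B - insert c (A - {x})" "b \<noteq> x"
    using B_eq b(1) x private_neighbour_of_x(1,4) by auto
  then have "2 \<le> card (B - insert c (A - {x}))"
    using two_le_card[OF finite_Diff[OF finite_B]] by blast
  then show ?thesis
    using far_from_B_imp_C[OF P] by simp
qed

text \<open>Swapping \<open>z\<close> back for \<open>b\<close>, now in \<open>C\<close>, gives an independent IR-set that is a neighbour
  of \<open>C\<close> other than \<open>A\<close>.\<close>
lemma edge_of_B_impossible: False
proof -
  define Q where "Q = insert b (C - {z})"
  have Q_cases: "q = b \<or> q = c \<or> q \<in> A - {x, z}" if "q \<in> Q" for q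
    using that unfolding Q_def C_eq_swap_at_x by blast
  have "\<not> adj b r \<and> \<not> adj r b \<and> \<not> adj c r \<and> \<not> adj r c" if "r \<in> A - {x, z}" for r
    using that b_nonadj private_neighbour_of_x(6) adj_commute by blast
  then have "\<not> adj s t" if "s \<in> Q" "t \<in> Q" for s t
    using Q_cases[OF that(1)] Q_cases[OF that(2)] A_nonadj private_neighbour_of_x(5) adj_commute
      adj_irrefl
    by (elim disjE) blast+
  then have "independent Q"
    unfolding independent_def by blast
  moreover have "z \<in> C" "b \<notin> C"
    using z x(2) C_eq_swap_at_x b(1) private_neighbour_of_x(4) by auto
  ultimately have "Q \<in> IR_sets W F" "swap C Q"
    unfolding Q_def using independent_swap_IR_setI[OF C _ _ b(2)] by blast+
  then have "Q = A"
    by (rule swap_C_eq_A)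
  moreover have "c \<in> Q"
    using private_neighbour_of_x(2) C_eq_swap_at_x unfolding Q_def by auto
  ultimately show False
    using private_neighbour_of_x(1) by simp
qed

end

lemma independent_B: "independent B"
proof (rule ccontr)
  assume "\<not> independent B"
  obtain z b where z: "z \<in> A" and b: "b \<notin> A" "adj z b" and B_eq: "B = insert b (A - {z})"
    using swap_A_B by (rule swapE)
  obtain x where x: "x \<in> A" "x \<noteq> z" "adj b x" and b_nonadj: "\<And>r. r \<in> A - {x, z} \<Longrightarrow> \<not> adj b r"
    using edge_of_B_at_new_vertex[OF \<open>\<not> independent B\<close> z b(1) B_eq] by blast
  obtain c where "c \<in> PN F x B"
    using IR_setsD(4)[OF B] B_eq x by blast
  then show False
    using edge_of_B_impossible[OF z b B_eq x] b_nonadj by blast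
qed

lemma neighbour_of_new_vertex_of_C:
  assumes x: "x \<in> A" and c: "c \<notin> A" and C_eq: "C = insert c (A - {x})"
  obtains z where "z \<in> A" "z \<noteq> x" "adj c z"
proof -
  obtain s t where st: "s \<in> C" "t \<in> C" "adj s t"
    using not_independent_C unfolding independent_def by blast
  then have "s = c \<or> t = c"
    using A_nonadj C_eq by blast
  then have "\<exists>z\<in>C. z \<noteq> c \<and> adj c z"
    using st adj_commute adj_neq by blast
  then show thesis
    using that C_eq by blast
qed

lemma new_vertex_of_C_has_two_neighbours:
  assumes x: "x \<in> A" and c: "c \<notin> A" and C_eq: "C = insert c (A - {x})"
    and z: "z \<in> A" "z \<noteq> x" "adj c z"
  shows "\<exists>z'\<in>A - {x}. z' \<noteq> z \<and> adj c z'"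
proof (rule ccontr)
  assume "\<not> ?thesis"
  then have c_nonadj: "\<not> adj c r" if "r \<in> A - {x, z}" for r
    using that by blast
  have cC: "c \<in> C" and zC: "z \<in> C"
    using C_eq z by auto
  obtain p where p_private: "p \<in> PN F z C"
    using IR_setsD(4)[OF C zC] by blast
  have pC: "p \<notin> C" and "adj z p"
    using PN_of_nonisolated[OF p_private zC cC] z(3) adj_commute by blast+
  have "\<not> adj s t" if "s \<in> C - {z}" "t \<in> C - {z}" for s t
    using that c_nonadj[of s] c_nonadj[of t] A_nonadj adj_commute adj_irrefl C_eq by auto
  then have "independent (C - {z})"
    unfolding independent_def by blast
  then have "independent (insert p (C - {z}))"
    using independent_insert_PN[OF _ p_private] by blast
  then have "insert p (C - {z}) = A"
    using independent_swap_IR_setI[OF C zC pC \<open>adj z p\<close>] swap_C_eq_A by blast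
  moreover have "c \<in> insert p (C - {z})"
    using cC z c by auto
  ultimately show False
    using c by blast
qed

end

locale pendant_config_fork = pendant_config W F A B C for W :: "'v set" and F A B C +
  fixes x c z\<^sub>1 z\<^sub>2 :: 'v
  assumes x: "x \<in> A" and c: "c \<notin> A" "adj x c" and C_eq: "C = insert c (A - {x})"
    and z\<^sub>1: "z\<^sub>1 \<in> A" "z\<^sub>1 \<noteq> x" "adj c z\<^sub>1" and z\<^sub>2: "z\<^sub>2 \<in> A" "z\<^sub>2 \<noteq> x" "adj c z\<^sub>2"
    and z\<^sub>1_neq_z\<^sub>2: "z\<^sub>1 \<noteq> z\<^sub>2"
    and neighbours_of_c: "\<And>z. z \<in> A \<Longrightarrow> z \<noteq> x \<Longrightarrow> adj c z \<Longrightarrow> z = z\<^sub>1 \<or> z = z\<^sub>2"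
begin

abbreviation "p\<^sub>1 \<equiv> private_choice C z\<^sub>1"
abbreviation "p\<^sub>2 \<equiv> private_choice C z\<^sub>2"

lemma c_in_C: "c \<in> C" and x_notin_C: "x \<notin> C"
  using C_eq c x by auto

lemma p\<^sub>1: "p\<^sub>1 \<in> PN F z\<^sub>1 C" "p\<^sub>1 \<notin> C" "p\<^sub>1 \<notin> A" "adj z\<^sub>1 p\<^sub>1" "\<not> adj z\<^sub>2 p\<^sub>1" "p\<^sub>1 \<noteq> x"
proof -
  have z\<^sub>1C: "z\<^sub>1 \<in> C" and z\<^sub>2C: "z\<^sub>2 \<in> C"
    using C_eq z\<^sub>1 z\<^sub>2 by auto
  show p: "p\<^sub>1 \<in> PN F z\<^sub>1 C"
    using private_choice_PN[OF C z\<^sub>1C] .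
  show "p\<^sub>1 \<notin> C" and adj: "adj z\<^sub>1 p\<^sub>1"
    using private_choice_nonisolated[OF C z\<^sub>1C c_in_C] z\<^sub>1(3) adj_commute by blast+
  show "\<not> adj z\<^sub>2 p\<^sub>1"
    using PN_elsewhere[OF p z\<^sub>2C] z\<^sub>1_neq_z\<^sub>2 by blast
  show "p\<^sub>1 \<noteq> x"
    using A_nonadj z\<^sub>1(1) x adj by blast
  then show "p\<^sub>1 \<notin> A"
    using \<open>p\<^sub>1 \<notin> C\<close> C_eq by blast
qed

lemma fork_sym: "pendant_config_fork W F A B C x c z\<^sub>2 z\<^sub>1"
  using x c C_eq z\<^sub>1 z\<^sub>2 z\<^sub>1_neq_z\<^sub>2 neighbours_of_c by unfold_locales blast+

lemmas p\<^sub>2 = pendant_config_fork.p\<^sub>1[OF fork_sym]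

lemma adj_p\<^sub>1_x_if_B_swaps_z\<^sub>2:
  assumes B_eq: "B = insert p\<^sub>2 (A - {z\<^sub>2})"
  shows "adj p\<^sub>1 x"
proof (rule ccontr)
  assume "\<not> adj p\<^sub>1 x"
  define B' where "B' = insert p\<^sub>1 (A - {z\<^sub>1})"
  have "\<not> adj p\<^sub>1 r" if "r \<in> A - {z\<^sub>1}" for r
    using PN_elsewhere[OF p\<^sub>1(1), of r] \<open>\<not> adj p\<^sub>1 x\<close> that C_eq by (cases "r = x") auto
  then have "independent B'"
    unfolding B'_def independent_def using A_nonadj adj_commute adj_irrefl by blast
  then have "B' \<in> IR_sets W F" "swap A B'"
    unfolding B'_def using independent_swap_IR_setI[OF A z\<^sub>1(1) p\<^sub>1(3,4)] by blast+
  then have "B' = B \<or> B' = C"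
    by (rule swap_A_eq_B_or_C)
  moreover have "z\<^sub>2 \<in> B'" "z\<^sub>2 \<notin> B" "x \<in> B'"
    unfolding B'_def B_eq using z\<^sub>1_neq_z\<^sub>2 z\<^sub>1 z\<^sub>2 x p\<^sub>2(3) by auto
  ultimately show False
    using x_notin_C by blast
qed

lemma swap_z\<^sub>1_for_c_IR_set:
  assumes B_eq: "B = insert p\<^sub>2 (A - {z\<^sub>2})"
  shows "insert c (A - {z\<^sub>1}) \<in> IR_sets W F" (is "?Q \<in> _")
proof -
  have "\<not> adj p\<^sub>2 x"
    using independent_B B_eq x z\<^sub>2(2) unfolding independent_def by blast
  have elsewhere_C: "\<not> adj p t" if "p \<in> PN F z C" "t \<in> C" "t \<noteq> z" for p z t
    using PN_elsewhere[OF that] by blast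
  have "\<exists>w. w \<in> PN F q ?Q" if q: "q \<in> ?Q" for q
  proof -
    consider "q = c" | "q = x" | "q = z\<^sub>2" | "q \<in> A - {x, z\<^sub>1, z\<^sub>2}"
      using q by blast
    then show ?thesis
    proof cases
      case 1
      have "z\<^sub>1 \<in> PN F q ?Q"
        using 1 z\<^sub>1 c A_nonadj adj_commute by (intro PN_I) auto
      then show ?thesis ..
    next
      case 2
      have "p\<^sub>1 \<in> PN F q ?Q"
        using 2 adj_p\<^sub>1_x_if_B_swaps_z\<^sub>2[OF B_eq] elsewhere_C[OF p\<^sub>1(1)] p\<^sub>1(2) c_in_C z\<^sub>1 c C_eq
        by (intro PN_I) auto
      then show ?thesis ..
    next
      case 3
      have "p\<^sub>2 \<in> PN F q ?Q"
        using 3 p\<^sub>2(2,4,6) \<open>\<not> adj p\<^sub>2 x\<close> elsewhere_C[OF p\<^sub>2(1)] c_in_C z\<^sub>2 c C_eq adj_commute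
        by (intro PN_I) auto
      then show ?thesis ..
    next
      case 4
      have "q \<in> PN F q ?Q"
        using 4 neighbours_of_c[of q] c A_nonadj adj_commute by (intro PN_I) auto
      then show ?thesis ..
    qed
  qed
  then show ?thesis
    using swap_IR_setI[OF A z\<^sub>1(1) c(1)] z\<^sub>1(3) adj_commute by blast
qed

lemma B_neq_swap_z\<^sub>2: "B \<noteq> insert p\<^sub>2 (A - {z\<^sub>2})"
proof
  assume B_eq: "B = insert p\<^sub>2 (A - {z\<^sub>2})"
  have "swap A (insert c (A - {z\<^sub>1}))"
    using swapI[OF z\<^sub>1(1) c(1)] z\<^sub>1(3) adj_commute by blast
  then have "insert c (A - {z\<^sub>1}) = B \<or> insert c (A - {z\<^sub>1}) = C"
    using swap_A_eq_B_or_C swap_z\<^sub>1_for_c_IR_set[OF B_eq] by blast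
  moreover have "c \<notin> B" "x \<in> insert c (A - {z\<^sub>1})"
    using B_eq c_in_C p\<^sub>2(2) c z\<^sub>1(2) x by auto
  ultimately show False
    using x_notin_C by blast
qed

lemma double_swap_IR_set: "insert p\<^sub>1 (insert p\<^sub>2 (A - {z\<^sub>1, z\<^sub>2})) \<in> IR_sets W F"
  (is "?P \<in> _")
proof (rule IR_setI)
  have "p\<^sub>1 \<noteq> p\<^sub>2"
    using p\<^sub>1(4) p\<^sub>2(5) by auto
  moreover have "2 \<le> card A"
    using two_le_card[OF finite_A] z\<^sub>1(1) z\<^sub>2(1) z\<^sub>1_neq_z\<^sub>2 by blast
  ultimately show "card ?P = IR W F"
    using finite_A p\<^sub>1(3) p\<^sub>2(3) z\<^sub>1(1) z\<^sub>2(1) z\<^sub>1_neq_z\<^sub>2 IR_setsD(3)[OF A] by (simp add: card_Diff_subset)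
  show "?P \<subseteq> W"
    using IR_setsD(1)[OF A] adj_in_W p\<^sub>1(4) p\<^sub>2(4) by blast
  have elsewhere_C: "p \<noteq> t \<and> \<not> adj p t \<and> \<not> adj t p" if "p \<in> PN F z C" "t \<in> C" "t \<noteq> z" for p z t
    using PN_elsewhere[OF that] by blast
  fix q assume q: "q \<in> ?P"
  then consider "q = p\<^sub>1" | "q = p\<^sub>2" | "q = x" | "q \<in> A - {x, z\<^sub>1, z\<^sub>2}"
    using x by blast
  then show "\<exists>w. w \<in> PN F q ?P"
  proof cases
    case 1
    have "z\<^sub>1 \<in> PN F q ?P"
      using 1 p\<^sub>1(4) p\<^sub>2(3,5) z\<^sub>1(1) A_nonadj adj_commute by (intro PN_I) auto
    then show ?thesis ..
  next
    case 2
    have "z\<^sub>2 \<in> PN F q ?P"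
      using 2 p\<^sub>2(4) p\<^sub>1(3,5) z\<^sub>2(1) A_nonadj adj_commute by (intro PN_I) auto
    then show ?thesis ..
  next
    case 3
    have "c \<in> PN F q ?P"
      using 3 c c_in_C p\<^sub>1(2) p\<^sub>2(2) elsewhere_C[OF p\<^sub>1(1) c_in_C] elsewhere_C[OF p\<^sub>2(1) c_in_C]
        z\<^sub>1 z\<^sub>2 neighbours_of_c adj_commute
      by (intro PN_I) auto
    then show ?thesis ..
  next
    case 4
    then have "q \<in> C"
      using C_eq by blast
    then have "q \<in> PN F q ?P"
      using 4 elsewhere_C[OF p\<^sub>1(1) \<open>q \<in> C\<close>] elsewhere_C[OF p\<^sub>2(1) \<open>q \<in> C\<close>] A_nonadj
      by (intro PN_I) auto
    then show ?thesis ..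
  qed
qed

lemma B_swaps_z\<^sub>1_or_z\<^sub>2: "B = insert p\<^sub>1 (A - {z\<^sub>1}) \<or> B = insert p\<^sub>2 (A - {z\<^sub>2})"
proof -
  let ?P = "insert p\<^sub>1 (insert p\<^sub>2 (A - {z\<^sub>1, z\<^sub>2}))"
  have "z\<^sub>1 \<noteq> p\<^sub>1" "z\<^sub>1 \<noteq> p\<^sub>2" "z\<^sub>2 \<noteq> p\<^sub>1" "z\<^sub>2 \<noteq> p\<^sub>2"
    using z\<^sub>1(1) z\<^sub>2(1) p\<^sub>1(3) p\<^sub>2(3) by auto
  then have z_notin_P: "z\<^sub>1 \<notin> ?P" "z\<^sub>2 \<notin> ?P"
    by simp_all
  then have "{z\<^sub>1, z\<^sub>2} \<subseteq> A - ?P"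
    using z\<^sub>1(1) z\<^sub>2(1) by simp
  then have "2 \<le> card (A - ?P)"
    using two_le_card[OF finite_Diff[OF finite_A] _ z\<^sub>1_neq_z\<^sub>2] by blast
  then have "?P \<noteq> A" "?P \<noteq> B"
    using card_Diff_swap[OF swap_A_B] by fastforce+
  moreover have "x \<in> ?P"
    using x z\<^sub>1(2) z\<^sub>2(2) by simp
  then have "?P \<noteq> C"
    using x_notin_C by blast
  ultimately have "swap B ?P"
    using IR_sets_near_B[OF double_swap_IR_set] by blast
  obtain u b where u: "u \<in> A" "adj u b" and B_eq: "B = insert b (A - {u})"
    using swap_A_B by (rule swapE)
  obtain u' b' where P_eq: "?P = insert b' (B - {u'})"
    using \<open>swap B ?P\<close> by (rule swapE)
  have "u = z\<^sub>1 \<or> u = z\<^sub>2"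
  proof (rule ccontr)
    assume "\<not> (u = z\<^sub>1 \<or> u = z\<^sub>2)"
    then have "{z\<^sub>1, z\<^sub>2} \<subseteq> B - ?P"
      using B_eq z\<^sub>1(1) z\<^sub>2(1) z_notin_P by auto
    moreover have "B - ?P \<subseteq> {u'}"
      using P_eq by blast
    ultimately show False
      using z\<^sub>1_neq_z\<^sub>2 by blast
  qed
  moreover have "p\<^sub>1 \<in> insert b' (B - {u'})" "p\<^sub>2 \<in> insert b' (B - {u'})"
    unfolding P_eq[symmetric] by auto
  then have "p\<^sub>1 = b \<or> p\<^sub>1 = b'" "p\<^sub>2 = b \<or> p\<^sub>2 = b'"
    using B_eq p\<^sub>1(3) p\<^sub>2(3) by auto
  then have "b = p\<^sub>1 \<or> b = p\<^sub>2"
    using p\<^sub>1(4) p\<^sub>2(5) by auto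
  ultimately show ?thesis
    using B_eq u(2) p\<^sub>1(5) p\<^sub>2(5) by auto
qed

lemma no_fork: False
  using B_swaps_z\<^sub>1_or_z\<^sub>2 B_neq_swap_z\<^sub>2 pendant_config_fork.B_neq_swap_z\<^sub>2[OF fork_sym] by blast

end

context pendant_config
begin

lemma no_pendant_config: False
proof -
  obtain x c where x: "x \<in> A" and c: "c \<notin> A" "adj x c" and C_eq: "C = insert c (A - {x})"
    using swap_A_C by (rule swapE)
  obtain z\<^sub>1 where z\<^sub>1: "z\<^sub>1 \<in> A" "z\<^sub>1 \<noteq> x" "adj c z\<^sub>1"
    using neighbour_of_new_vertex_of_C[OF x c(1) C_eq] .
  obtain z\<^sub>2 where z\<^sub>2: "z\<^sub>2 \<in> A" "z\<^sub>2 \<noteq> x" "adj c z\<^sub>2" and "z\<^sub>2 \<noteq> z\<^sub>1"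
    using new_vertex_of_C_has_two_neighbours[OF x c(1) C_eq z\<^sub>1] by blast
  have "z = z\<^sub>1 \<or> z = z\<^sub>2" if z: "z \<in> A" "z \<noteq> x" "adj c z" for z
  proof (rule ccontr)
    assume "\<not> (z = z\<^sub>1 \<or> z = z\<^sub>2)"
    then have "distinct [z, z\<^sub>1, z\<^sub>2]"
      using \<open>z\<^sub>2 \<noteq> z\<^sub>1\<close> by auto
    moreover have "{z, z\<^sub>1, z\<^sub>2} \<subseteq> A \<inter> nonisolated C"
      using z z\<^sub>1 z\<^sub>2 C_eq adj_commute unfolding nonisolated_def by auto
    ultimately have "3 \<le> card (A \<inter> nonisolated C)"
      using three_le_card[OF finite_Int[OF disjI1[OF finite_A]]] by blast
    then show False
      using card_A_Int_nonisolated_le_2[OF C] by simp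
  qed
  then interpret pendant_config_fork W F A B C x c z\<^sub>1 z\<^sub>2
    using x c C_eq z\<^sub>1 z\<^sub>2 \<open>z\<^sub>2 \<noteq> z\<^sub>1\<close> by unfold_locales auto
  show False
    by (rule no_fork)
qed

end

lemma unique_leaf_not_IR_graph:
  assumes IR_graph: "is_IR_graph V E" and G: "graph V E"
    and ab: "{a, b} \<in> E" and ca: "{c, a} \<in> E" and "c \<noteq> b"
    and near_ab: "\<And>y. y \<in> V \<Longrightarrow> y = a \<or> y = b \<or> {y, a} \<in> E \<or> {y, b} \<in> E"
    and leaf_c: "\<And>y. {c, y} \<in> E \<Longrightarrow> y = a"
    and only_leaf: "\<And>y. {y, a} \<in> E \<Longrightarrow> y \<noteq> b \<Longrightarrow> y = c"
  shows False
proof -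
  obtain W :: "nat set" and F g where H: "graph W F" and g: "bij_betw g V (IR_sets W F)"
    and g_edges: "\<And>u v. u \<in> V \<Longrightarrow> v \<in> V \<Longrightarrow> {u, v} \<in> E \<longleftrightarrow> {g u, g v} \<in> IR_edges W F"
    using IR_graph unfolding is_IR_graph_def graph_iso_def by blast
  interpret simple_graph W F
    using H by unfold_locales
  have g_in: "g y \<in> IR_sets W F" if "y \<in> V" for y
    using g that bij_betwE by blast
  have swap_iff: "swap (g u) (g v) \<longleftrightarrow> {u, v} \<in> E" if "u \<in> V" "v \<in> V" for u v
    using IR_edges_iff_swap[OF g_in g_in] g_edges that by blast
  have V_abc: "a \<in> V" "b \<in> V" "c \<in> V"
    using graph_edge_in_V[OF G] ab ca by blast+
  have preimage: "\<exists>y\<in>V. X = g y" if "X \<in> IR_sets W F" for X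
    using g that unfolding bij_betw_def by blast
  interpret pendant_config W F "g a" "g b" "g c"
  proof unfold_locales
    show "g b \<noteq> g c"
      using g V_abc \<open>c \<noteq> b\<close> unfolding bij_betw_def inj_on_def by metis
    show "swap (g a) (g b)" "swap (g a) (g c)"
      using swap_iff V_abc ab ca by (auto simp: insert_commute)
    fix X assume "X \<in> IR_sets W F"
    then obtain y where y: "y \<in> V" "X = g y"
      using preimage by blast
    show "swap (g c) X \<Longrightarrow> X = g a"
      using swap_iff y V_abc leaf_c by blast
    show "swap (g a) X \<Longrightarrow> X = g b \<or> X = g c"
      using swap_iff y V_abc only_leaf by (metis insert_commute)
    show "X = g a \<or> X = g b \<or> X = g c \<or> swap (g b) X"
      using swap_iff y V_abc near_ab only_leaf by (metis insert_commute)
  qed (use g_in V_abc in blast)+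
  show False
    by (rule no_pendant_config)
qed

section \<open>\<open>S(2,2)\<close> is an IR-graph\<close>

text \<open>A witness for \<open>S(2,2)\<close>: the path \<open>2 - 5 - 4 - 3\<close> together with two vertices \<open>6, 7\<close>
  adjacent to both \<open>2\<close> and \<open>3\<close>.\<close>
definition S22_host_V :: "nat set" where
  "S22_host_V = {2, 3, 4, 5, 6, 7}"

definition S22_host_E :: "nat set set" where
  "S22_host_E = {{2, 5}, {2, 6}, {2, 7}, {3, 4}, {3, 6}, {3, 7}, {4, 5}}"

definition S22_host_IR_sets :: "nat set set" where
  "S22_host_IR_sets = {{3, 4, 6}, {2, 5, 6}, {3, 4, 7}, {2, 5, 7}, {4, 6, 7}, {5, 6, 7}}"

lemma graph_S22_host: "graph S22_host_V S22_host_E"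
  unfolding graph_def S22_host_V_def S22_host_E_def by auto

lemma cnbhd_S22_host:
  "cnbhd S22_host_E 2 = {2, 5, 6, 7}" "cnbhd S22_host_E 3 = {3, 4, 6, 7}"
  "cnbhd S22_host_E 4 = {3, 4, 5}" "cnbhd S22_host_E 5 = {2, 4, 5}"
  "cnbhd S22_host_E 6 = {2, 3, 6}" "cnbhd S22_host_E 7 = {2, 3, 7}"
  by (auto simp: cnbhd_def S22_host_E_def doubleton_eq_iff)

lemma irredundant_S22_host_IR_sets:
  "\<forall>D\<in>S22_host_IR_sets. irredundant S22_host_V S22_host_E D \<and> card D = 3"
  unfolding S22_host_IR_sets_def S22_host_V_def
  by (simp add: irredundant_def PN_def cnbhd_set_def cnbhd_S22_host insert_Diff_if)

lemma irredundant_S22_host_subsets: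
  "\<forall>D\<in>Pow S22_host_V. irredundant S22_host_V S22_host_E D \<longrightarrow>
     card D \<le> 3 \<and> (card D = 3 \<longrightarrow> D \<in> S22_host_IR_sets)"
  unfolding S22_host_V_def Pow_insert Pow_empty S22_host_IR_sets_def
  apply (simp only: image_insert image_empty Un_insert_left Un_empty_left insert_absorb2 ball_simps)
  apply (simp add: irredundant_def PN_def cnbhd_set_def cnbhd_S22_host insert_Diff_if)
  done

lemma S22_host_irredundant_le_3:
  "irredundant S22_host_V S22_host_E D \<Longrightarrow> card D \<le> 3 \<and> (card D = 3 \<longrightarrow> D \<in> S22_host_IR_sets)"
proof -
  assume irr: "irredundant S22_host_V S22_host_E D"
  then have "D \<in> Pow S22_host_V"
    by (simp add: irredundant_def)
  then show ?thesis
    using irredundant_S22_host_subsets irr by blast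
qed

lemma IR_S22_host: "IR S22_host_V S22_host_E = 3"
proof -
  interpret simple_graph S22_host_V S22_host_E
    by (rule simple_graph.intro[OF graph_S22_host])
  obtain D where "irredundant S22_host_V S22_host_E D" "card D = IR S22_host_V S22_host_E"
    using IR_attained by blast
  then have "IR S22_host_V S22_host_E \<le> 3"
    using S22_host_irredundant_le_3 by metis
  moreover have "{3, 4, 6} \<in> S22_host_IR_sets"
    unfolding S22_host_IR_sets_def by simp
  then have "3 \<le> IR S22_host_V S22_host_E"
    using card_le_IR irredundant_S22_host_IR_sets by metis
  ultimately show ?thesis
    by simp
qed

lemma IR_sets_S22_host: "IR_sets S22_host_V S22_host_E = S22_host_IR_sets"
  using S22_host_irredundant_le_3 irredundant_S22_host_IR_sets
  unfolding IR_sets_def IR_S22_host by blast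

lemma doubleton_in_IR_edges_iff:
  "{X, Y} \<in> IR_edges W F \<longleftrightarrow> X \<in> IR_sets W F \<and> Y \<in> IR_sets W F \<and>
     ((\<exists>u\<in>X. \<exists>v\<in>Y. {u, v} \<in> F \<and> Y = (X - {u}) \<union> {v}) \<or>
      (\<exists>u\<in>Y. \<exists>v\<in>X. {u, v} \<in> F \<and> X = (Y - {u}) \<union> {v}))"
  unfolding IR_edges_def by (auto simp: doubleton_eq_iff)

definition S22_labelling :: "nat \<Rightarrow> nat set" where
  "S22_labelling i = [{4, 6, 7}, {5, 6, 7}, {3, 4, 6}, {3, 4, 7}, {2, 5, 6}, {2, 5, 7}] ! i"

lemma is_IR_graph_S22: "is_IR_graph S22_V S22_E"
  unfolding is_IR_graph_def graph_iso_def
proof (intro exI conjI)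
  show "graph S22_host_V S22_host_E"
    by (rule graph_S22_host)
  show "bij_betw S22_labelling S22_V (IR_sets S22_host_V S22_host_E)"
    unfolding IR_sets_S22_host bij_betw_def inj_on_def S22_V_def S22_host_IR_sets_def S22_labelling_def
    by (auto simp: set_eq_subset)
  show "\<forall>u\<in>S22_V. \<forall>v\<in>S22_V.
      {u, v} \<in> S22_E \<longleftrightarrow> {S22_labelling u, S22_labelling v} \<in> IR_edges S22_host_V S22_host_E"
    unfolding doubleton_in_IR_edges_iff IR_sets_S22_host
    unfolding S22_V_def S22_E_def S22_host_IR_sets_def S22_labelling_def
    by (simp add: S22_host_E_def insert_Diff_if doubleton_eq_iff set_eq_subset)
qed

section \<open>Trees of diameter 3\<close>

lemma walk_singleton: "walk V E [x] \<longleftrightarrow> x \<in> V"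
  by (simp add: walk_def)

lemma walk_Cons_Cons: "walk V E (x # y # xs) \<longleftrightarrow> x \<in> V \<and> {x, y} \<in> E \<and> walk V E (y # xs)"
  unfolding walk_def by (auto simp: All_less_Suc2)

lemma gdist_le: "walk V E xs \<Longrightarrow> hd xs = u \<Longrightarrow> last xs = v \<Longrightarrow> length xs = Suc m \<Longrightarrow> gdist V E u v \<le> m"
  unfolding gdist_def by (rule Least_le) blast

locale tree_graph =
  fixes V :: "'a set" and E :: "'a set set"
  assumes tree: "tree V E"
begin

lemma graph: "graph V E"
  using tree by (simp add: tree_def)

lemma finite_V: "finite V"
  using graph by (simp add: graph_def)

lemma edge_neq: "{u, v} \<in> E \<Longrightarrow> u \<noteq> v"
  using graph_edge_neq[OF graph] .

lemma no_loop: "{x} \<notin> E"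
  using edge_neq[of x x] by auto

lemma edge_in_V: "{u, v} \<in> E \<Longrightarrow> u \<in> V \<and> v \<in> V"
  using graph_edge_in_V[OF graph] .

lemma no_cycle: "distinct xs \<Longrightarrow> 3 \<le> length xs \<Longrightarrow> walk V E xs \<Longrightarrow> {last xs, hd xs} \<in> E \<Longrightarrow> False"
  using tree unfolding tree_def acyclic_graph_def is_cycle_def by blast

lemma no_3_cycle: "distinct [a, b, c] \<Longrightarrow> {a, b} \<in> E \<Longrightarrow> {b, c} \<in> E \<Longrightarrow> {c, a} \<in> E \<Longrightarrow> False"
  using no_cycle[of "[a, b, c]"] by (simp add: walk_Cons_Cons walk_singleton edge_in_V)

lemma no_4_cycle:
  "distinct [a, b, c, d] \<Longrightarrow> {a, b} \<in> E \<Longrightarrow> {b, c} \<in> E \<Longrightarrow> {c, d} \<in> E \<Longrightarrow> {d, a} \<in> E \<Longrightarrow> False"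
  using no_cycle[of "[a, b, c, d]"] by (simp add: walk_Cons_Cons walk_singleton edge_in_V)

lemma no_5_cycle:
  "distinct [a, b, c, d, e] \<Longrightarrow> {a, b} \<in> E \<Longrightarrow> {b, c} \<in> E \<Longrightarrow> {c, d} \<in> E \<Longrightarrow> {d, e} \<in> E \<Longrightarrow>
    {e, a} \<in> E \<Longrightarrow> False"
  using no_cycle[of "[a, b, c, d, e]"] by (simp add: walk_Cons_Cons walk_singleton edge_in_V)

lemma no_6_cycle:
  "distinct [a, b, c, d, e, f] \<Longrightarrow> {a, b} \<in> E \<Longrightarrow> {b, c} \<in> E \<Longrightarrow> {c, d} \<in> E \<Longrightarrow> {d, e} \<in> E \<Longrightarrow>
    {e, f} \<in> E \<Longrightarrow> {f, a} \<in> E \<Longrightarrow> False"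
  using no_cycle[of "[a, b, c, d, e, f]"] by (simp add: walk_Cons_Cons walk_singleton edge_in_V)

lemma no_7_cycle:
  "distinct [a, b, c, d, e, f, g] \<Longrightarrow> {a, b} \<in> E \<Longrightarrow> {b, c} \<in> E \<Longrightarrow> {c, d} \<in> E \<Longrightarrow> {d, e} \<in> E \<Longrightarrow>
    {e, f} \<in> E \<Longrightarrow> {f, g} \<in> E \<Longrightarrow> {g, a} \<in> E \<Longrightarrow> False"
  using no_cycle[of "[a, b, c, d, e, f, g]"] by (simp add: walk_Cons_Cons walk_singleton edge_in_V)

lemma gdist_walk:
  assumes "u \<in> V" "v \<in> V"
  obtains xs where "walk V E xs" "hd xs = u" "last xs = v" "length xs = Suc (gdist V E u v)"
proof -
  obtain xs where xs: "walk V E xs" "hd xs = u" "last xs = v"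
    using tree assms unfolding tree_def connected_def by blast
  then obtain m where "length xs = Suc m"
    by (cases xs) (auto simp: walk_def)
  with xs have "\<exists>m xs. walk V E xs \<and> hd xs = u \<and> last xs = v \<and> length xs = Suc m"
    by blast
  then have "\<exists>xs. walk V E xs \<and> hd xs = u \<and> last xs = v \<and> length xs = Suc (gdist V E u v)"
    unfolding gdist_def by (rule LeastI_ex)
  then show thesis
    using that by blast
qed

lemma gdist_le_3_cases:
  assumes "u \<in> V" "v \<in> V" "gdist V E u v \<le> 3"
  shows "u = v \<or> {u, v} \<in> E \<or> (\<exists>p. {u, p} \<in> E \<and> {p, v} \<in> E) \<or>
    (\<exists>p q. {u, p} \<in> E \<and> {p, q} \<in> E \<and> {q, v} \<in> E)"
proof -
  obtain xs where xs: "walk V E xs" "hd xs = u" "last xs = v" "length xs = Suc (gdist V E u v)"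
    using gdist_walk[OF assms(1,2)] .
  then consider "length xs = 1" | "length xs = 2" | "length xs = 3" | "length xs = 4"
    using assms(3) by linarith
  then show ?thesis
  proof cases
    case 1
    then obtain x0 where "xs = [x0]"
      by (auto simp: length_Suc_conv)
    then show ?thesis using xs by simp
  next
    case 2
    then obtain x0 x1 where "xs = [x0, x1]"
      by (auto simp: length_Suc_conv numeral_2_eq_2)
    then show ?thesis using xs by (simp add: walk_Cons_Cons)
  next
    case 3
    then obtain x0 x1 x2 where "xs = [x0, x1, x2]"
      by (auto simp: length_Suc_conv numeral_3_eq_3)
    then show ?thesis using xs by (auto simp: walk_Cons_Cons)
  next
    case 4
    then obtain x0 x1 x2 x3 where "xs = [x0, x1, x2, x3]"
      by (auto simp: length_Suc_conv eval_nat_numeral)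
    then show ?thesis using xs by (auto simp: walk_Cons_Cons)
  qed
qed

lemma gdist_eq_3D:
  assumes u: "u \<in> V" and v: "v \<in> V" and d: "gdist V E u v = 3"
  shows "u \<noteq> v" "{u, v} \<notin> E" "\<And>p. {u, p} \<in> E \<Longrightarrow> {p, v} \<notin> E"
    "\<exists>p q. {u, p} \<in> E \<and> {p, q} \<in> E \<and> {q, v} \<in> E"
proof -
  show "u \<noteq> v"
    using gdist_le[of V E "[u]" u v 0] u d by (auto simp: walk_singleton)
  show "{u, v} \<notin> E"
    using gdist_le[of V E "[u, v]" u v 1] u v d by (auto simp: walk_Cons_Cons walk_singleton)
  show "{p, v} \<notin> E" if "{u, p} \<in> E" for p
    using gdist_le[of V E "[u, p, v]" u v 2] u v d that edge_in_V
    by (auto simp: walk_Cons_Cons walk_singleton)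
  then show "\<exists>p q. {u, p} \<in> E \<and> {p, q} \<in> E \<and> {q, v} \<in> E"
    using gdist_le_3_cases[OF u v] d \<open>u \<noteq> v\<close> \<open>{u, v} \<notin> E\<close> by auto
qed

lemma diameter_3D:
  assumes "diameter V E = 3"
  shows "\<And>u v. u \<in> V \<Longrightarrow> v \<in> V \<Longrightarrow> gdist V E u v \<le> 3" "\<exists>u\<in>V. \<exists>v\<in>V. gdist V E u v = 3"
proof -
  let ?D = "{gdist V E u v | u v. u \<in> V \<and> v \<in> V}"
  have "?D = (\<lambda>(u, v). gdist V E u v) ` (V \<times> V)"
    by auto
  then have fin: "finite ?D"
    using finite_V by simp
  show "gdist V E u v \<le> 3" if "u \<in> V" "v \<in> V" for u v
  proof -
    have "gdist V E u v \<in> ?D"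
      using that by blast
    then show ?thesis
      using Max_ge[OF fin] assms unfolding diameter_def by simp
  qed
  have "V \<noteq> {}"
    using tree unfolding tree_def connected_def by blast
  then have "Max ?D \<in> ?D"
    using fin by (intro Max_in) auto
  then show "\<exists>u\<in>V. \<exists>v\<in>V. gdist V E u v = 3"
    using assms unfolding diameter_def by auto
qed

lemma edge_commute: "{u, v} \<in> E \<longleftrightarrow> {v, u} \<in> E"
  by (simp add: insert_commute)

text \<open>The cases below close the walk \<open>y - x - a - b - v\<close> with a walk of length \<open>3\<close> from \<open>y\<close>
  back to \<open>v\<close>; each such closed walk contains a cycle.\<close>
lemma no_3_walk_from_second_neighbour:
  assumes xa: "{x, a} \<in> E" and ab: "{a, b} \<in> E" and bv: "{b, v} \<in> E"
    and far: "x \<noteq> v" "{x, v} \<notin> E" "\<And>p. {x, p} \<in> E \<Longrightarrow> {p, v} \<notin> E"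
    and xy: "{x, y} \<in> E" "y \<noteq> a"
    and yp: "{y, p} \<in> E" and pq: "{p, q} \<in> E" and qv: "{q, v} \<in> E"
  shows False
proof -
  have "x \<noteq> a" "a \<noteq> b" "b \<noteq> v" "x \<noteq> b" "a \<noteq> v" "x \<noteq> y" "y \<noteq> b" "y \<noteq> v"
    using edge_neq[OF xa] edge_neq[OF ab] edge_neq[OF bv] edge_neq[OF xy(1)] far(2,3) xa bv xy(1) by blast+
  moreover have "q \<noteq> v" "q \<noteq> a" "q \<noteq> x" "q \<noteq> y" "p \<noteq> y" "p \<noteq> q"
    using edge_neq[OF yp] edge_neq[OF pq] edge_neq[OF qv] far(2,3) xa xy(1) qv by blast+
  moreover have "p \<noteq> x" "p \<noteq> v"
    using far(3)[of q] far(3)[of y] pq qv xy(1) yp by blast+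
  moreover have "{a, x} \<in> E" "{b, a} \<in> E" "{v, b} \<in> E" "{y, x} \<in> E" "{q, p} \<in> E" "{p, y} \<in> E" "{v, q} \<in> E"
    using xa ab bv xy yp pq qv by (simp_all add: edge_commute)
  ultimately show False
    using no_3_cycle[of x a y] no_4_cycle[of a b v q] no_4_cycle[of x a b y] no_5_cycle[of x a b p y]
      no_7_cycle[of x a b v q p y] xa ab bv xy yp pq qv far(1)
    by (cases "q = b"; cases "p = a"; cases "p = b") auto
qed

lemma far_end_is_leaf:
  assumes diam: "\<And>s t. s \<in> V \<Longrightarrow> t \<in> V \<Longrightarrow> gdist V E s t \<le> 3"
    and xa: "{x, a} \<in> E" and ab: "{a, b} \<in> E" and bv: "{b, v} \<in> E"
    and far: "x \<noteq> v" "{x, v} \<notin> E" "\<And>p. {x, p} \<in> E \<Longrightarrow> {p, v} \<notin> E"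
    and xy: "{x, y} \<in> E"
  shows "y = a"
proof (rule ccontr)
  assume "y \<noteq> a"
  have "y \<in> V" "v \<in> V"
    using edge_in_V xy bv by blast+
  then consider "y = v" | "{y, v} \<in> E" | p where "{y, p} \<in> E" "{p, v} \<in> E"
    | p q where "{y, p} \<in> E" "{p, q} \<in> E" "{q, v} \<in> E"
    using gdist_le_3_cases diam by blast
  then show False
  proof cases
    case 1
    then show False
      using far(2) xy by simp
  next
    case 2
    then show False
      using far(3) xy by blast
  next
    case (3 p)
    have "x \<noteq> a" "a \<noteq> b" "b \<noteq> v" "x \<noteq> b" "a \<noteq> v" "x \<noteq> y" "y \<noteq> b" "y \<noteq> v"
      "p \<noteq> y" "p \<noteq> v" "p \<noteq> a" "p \<noteq> x"
      using edge_neq xa ab bv xy 3 far(2,3) by blast+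
    moreover have "{a, x} \<in> E" "{b, a} \<in> E" "{v, b} \<in> E" "{y, x} \<in> E" "{v, p} \<in> E" "{p, y} \<in> E"
      using xa ab bv xy 3 by (simp_all add: edge_commute)
    ultimately show False
      using no_4_cycle[of x a b y] no_6_cycle[of x a b v p y] xa ab bv xy 3 \<open>y \<noteq> a\<close> far(1)
      by (cases "p = b") auto
  next
    case (4 p q)
    then show False
      using no_3_walk_from_second_neighbour[OF xa ab bv far xy \<open>y \<noteq> a\<close>] by blast
  qed
qed

lemma neighbour_of_centre_is_leaf:
  assumes diam: "\<And>s t. s \<in> V \<Longrightarrow> t \<in> V \<Longrightarrow> gdist V E s t \<le> 3"
    and ab: "{a, b} \<in> E" and bv: "{b, v} \<in> E" and far_av: "a \<noteq> v" "{a, v} \<notin> E"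
    and xa: "{x, a} \<in> E" and "x \<noteq> b" and xy: "{x, y} \<in> E"
  shows "y = a"
proof -
  have "{v, a} \<notin> E"
    using far_av(2) by (simp add: edge_commute)
  then have dist: "x \<noteq> a" "a \<noteq> b" "b \<noteq> v" "x \<noteq> v"
    using edge_neq xa ab bv by blast+
  have "{x, v} \<notin> E"
    using no_4_cycle[of x a b v] xa ab bv dist \<open>x \<noteq> b\<close> far_av(1) by (auto simp: edge_commute)
  moreover have "{p, v} \<notin> E" if xp: "{x, p} \<in> E" for p
  proof
    assume pv: "{p, v} \<in> E"
    have "p \<noteq> x" "p \<noteq> v" "p \<noteq> a"
      using edge_neq xp pv far_av(2) by blast+
    then show False
      using no_3_cycle[of x a b] no_5_cycle[of x a b v p] xa ab bv xp pv dist \<open>x \<noteq> b\<close> far_av(1)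
      by (cases "p = b") (auto simp: edge_commute)
  qed
  ultimately show ?thesis
    using far_end_is_leaf[OF diam xa ab bv dist(4) _ _ xy] by blast
qed

lemma double_star:
  assumes "diameter V E = 3"
  obtains u a b v where "{u, a} \<in> E" "{a, b} \<in> E" "{b, v} \<in> E" "u \<noteq> b" "v \<noteq> a"
    "\<And>x. x \<in> V \<Longrightarrow> x = a \<or> x = b \<or> {x, a} \<in> E \<or> {x, b} \<in> E"
    "\<And>x y. {x, a} \<in> E \<Longrightarrow> x \<noteq> b \<Longrightarrow> {x, y} \<in> E \<Longrightarrow> y = a"
    "\<And>x y. {x, b} \<in> E \<Longrightarrow> x \<noteq> a \<Longrightarrow> {x, y} \<in> E \<Longrightarrow> y = b"
proof -
  note diam = diameter_3D(1)[OF assms]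
  obtain u v where u: "u \<in> V" and v: "v \<in> V" and uv: "gdist V E u v = 3"
    using diameter_3D(2)[OF assms] by blast
  obtain a b where ua: "{u, a} \<in> E" and ab: "{a, b} \<in> E" and bv: "{b, v} \<in> E"
    using gdist_eq_3D(4)[OF u v uv] by blast
  have "{a, v} \<notin> E" "{b, u} \<notin> E" "a \<noteq> v" "b \<noteq> u"
    using gdist_eq_3D(2,3)[OF u v uv] ua bv by (auto simp: edge_commute)
  moreover have ba: "{b, a} \<in> E" and "{a, u} \<in> E"
    using ab ua by (simp_all add: edge_commute)
  ultimately have leaf_a: "y = a" if "{x, a} \<in> E" "x \<noteq> b" "{x, y} \<in> E" for x y
    using neighbour_of_centre_is_leaf[OF diam ab bv] that by blast
  have leaf_b: "y = b" if "{x, b} \<in> E" "x \<noteq> a" "{x, y} \<in> E" for x y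
    using neighbour_of_centre_is_leaf[OF diam ba \<open>{a, u} \<in> E\<close>] \<open>b \<noteq> u\<close> \<open>{b, u} \<notin> E\<close> that
    by blast
  have "x = a \<or> x = b \<or> {x, a} \<in> E \<or> {x, b} \<in> E" if x: "x \<in> V" for x
  proof -
    have "a \<in> V"
      using edge_in_V ab by blast
    then consider "x = a" | "{x, a} \<in> E" | w where "{x, w} \<in> E" "{w, a} \<in> E"
      | w\<^sub>1 w\<^sub>2 where "{x, w\<^sub>1} \<in> E" "{w\<^sub>1, w\<^sub>2} \<in> E" "{w\<^sub>2, a} \<in> E"
      using gdist_le_3_cases[OF x _ diam[OF x]] by blast
    then show ?thesis
    proof cases
      case (3 w)
      then show ?thesis
        using leaf_a[of w x] by (cases "w = b") (auto simp: edge_commute)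
    next
      case (4 w\<^sub>1 w\<^sub>2)
      then show ?thesis
        using leaf_a[of w\<^sub>2 w\<^sub>1] leaf_b[of w\<^sub>1 x] by (cases "w\<^sub>2 = b"; cases "w\<^sub>1 = a") (auto simp: edge_commute)
    qed auto
  qed
  then show thesis
    using that ua ab bv \<open>b \<noteq> u\<close> \<open>a \<noteq> v\<close> leaf_a leaf_b by blast
qed

end

lemma graph_isoI:
  assumes g: "bij_betw g V' V" and edges: "\<And>i j. i \<in> V' \<Longrightarrow> j \<in> V' \<Longrightarrow> {g i, g j} \<in> E \<longleftrightarrow> {i, j} \<in> E'"
  shows "graph_iso V E V' E'"
  unfolding graph_iso_def
proof (intro exI conjI ballI)
  show "bij_betw (the_inv_into V' g) V V'"
    using bij_betw_the_inv_into[OF g] .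
  fix x y assume "x \<in> V" "y \<in> V"
  then show "{x, y} \<in> E \<longleftrightarrow> {the_inv_into V' g x, the_inv_into V' g y} \<in> E'"
    using edges[of "the_inv_into V' g x" "the_inv_into V' g y"] g
    by (simp add: bij_betw_def f_the_inv_into_f the_inv_into_into)
qed

context tree_graph
begin

lemma double_star_S22:
  assumes ab: "{a, b} \<in> E"
    and leaf_a: "\<And>x y. {x, a} \<in> E \<Longrightarrow> x \<noteq> b \<Longrightarrow> {x, y} \<in> E \<Longrightarrow> y = a"
    and leaf_b: "\<And>x y. {x, b} \<in> E \<Longrightarrow> x \<noteq> a \<Longrightarrow> {x, y} \<in> E \<Longrightarrow> y = b"
    and u: "{u, a} \<in> E" "{u', a} \<in> E" "u \<noteq> b" "u' \<noteq> b" "u \<noteq> u'"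
    and v: "{v, b} \<in> E" "{v', b} \<in> E" "v \<noteq> a" "v' \<noteq> a" "v \<noteq> v'"
  shows "6 \<le> card V" "card V = 6 \<Longrightarrow> graph_iso V E S22_V S22_E"
proof -
  have adj_leaf: "{u, y} \<in> E \<longleftrightarrow> y = a" "{u', y} \<in> E \<longleftrightarrow> y = a"
    "{v, y} \<in> E \<longleftrightarrow> y = b" "{v', y} \<in> E \<longleftrightarrow> y = b" for y
    using leaf_a[OF u(1) u(3), of y] leaf_a[OF u(2) u(4), of y] leaf_b[OF v(1) v(3), of y]
      leaf_b[OF v(2) v(4), of y] u(1,2) v(1,2) by (auto simp: edge_commute)
  let ?xs = "[a, b, u, u', v, v']"
  have "a \<noteq> b" "u \<noteq> a" "u' \<noteq> a" "v \<noteq> b" "v' \<noteq> b"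
    using edge_neq ab u(1,2) v(1,2) by blast+
  then have "distinct ?xs"
    using u v adj_leaf(1,2)[of b] adj_leaf(3,4)[of a] by auto
  moreover have "set ?xs \<subseteq> V"
    using edge_in_V ab u(1,2) v(1,2) by auto
  moreover have "card (set ?xs) = 6"
    using distinct_card[OF \<open>distinct ?xs\<close>] by simp
  ultimately show "6 \<le> card V"
    using card_mono[OF finite_V \<open>set ?xs \<subseteq> V\<close>] by simp
  assume "card V = 6"
  then have V_eq: "V = set ?xs"
    using card_subset_eq[OF finite_V \<open>set ?xs \<subseteq> V\<close>] \<open>card (set ?xs) = 6\<close> by simp
  have adj_centre: "{a, y} \<in> E \<longleftrightarrow> y = b \<or> y = u \<or> y = u'" "{b, y} \<in> E \<longleftrightarrow> y = a \<or> y = v \<or> y = v'"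
    if "y \<in> V" for y
    using that \<open>distinct ?xs\<close> ab u(1,2) v(1,2) adj_leaf[of a] adj_leaf[of b] edge_neq[of a a] edge_neq[of b b]
    unfolding V_eq by (auto simp: edge_commute)
  show "graph_iso V E S22_V S22_E"
  proof (rule graph_isoI)
    show "bij_betw ((!) ?xs) S22_V V"
      unfolding V_eq S22_V_def using \<open>distinct ?xs\<close> by (intro bij_betw_nth) auto
    have "a \<in> V" "b \<in> V" "u \<in> V" "u' \<in> V" "v \<in> V" "v' \<in> V"
      unfolding V_eq by simp_all
    have dist: "a \<noteq> b" "a \<noteq> u" "a \<noteq> u'" "a \<noteq> v" "a \<noteq> v'" "b \<noteq> u" "b \<noteq> u'" "b \<noteq> v" "b \<noteq> v'"
      "u \<noteq> u'" "u \<noteq> v" "u \<noteq> v'" "u' \<noteq> v" "u' \<noteq> v'" "v \<noteq> v'"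
      using \<open>distinct ?xs\<close> by auto
    fix i j assume "i \<in> S22_V" "j \<in> S22_V"
    then show "{?xs ! i, ?xs ! j} \<in> E \<longleftrightarrow> {i, j} \<in> S22_E"
      unfolding S22_V_def S22_E_def
      by (simp only: insert_iff empty_iff, elim disjE)
        (simp_all add: adj_leaf adj_centre \<open>a \<in> V\<close> \<open>b \<in> V\<close> \<open>u \<in> V\<close> \<open>u' \<in> V\<close> \<open>v \<in> V\<close> \<open>v' \<in> V\<close>
          dist dist[symmetric] no_loop doubleton_eq_iff)
  qed
qed

end

lemma (in tree_graph) second_leaf:
  assumes IR_graph: "is_IR_graph V E" and ab: "{a, b} \<in> E"
    and near_ab: "\<And>x. x \<in> V \<Longrightarrow> x = a \<or> x = b \<or> {x, a} \<in> E \<or> {x, b} \<in> E"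
    and leaf_a: "\<And>x y. {x, a} \<in> E \<Longrightarrow> x \<noteq> b \<Longrightarrow> {x, y} \<in> E \<Longrightarrow> y = a"
    and u: "{u, a} \<in> E" "u \<noteq> b"
  obtains u' where "{u', a} \<in> E" "u' \<noteq> b" "u' \<noteq> u"
  using unique_leaf_not_IR_graph[OF IR_graph graph ab u(1) u(2) near_ab] leaf_a[OF u] that
  by blast

lemma (in tree_graph) diameter_3_IR_graph:
  assumes D: "diameter V E = 3" and IR_graph: "is_IR_graph V E"
  shows "6 \<le> card V \<and> (card V = 6 \<longrightarrow> graph_iso V E S22_V S22_E)"
proof (rule double_star[OF D])
  fix u a b v
  assume u: "{u, a} \<in> E" and ab: "{a, b} \<in> E" and v: "{b, v} \<in> E" and "u \<noteq> b" "v \<noteq> a"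
    and near: "\<And>x. x \<in> V \<Longrightarrow> x = a \<or> x = b \<or> {x, a} \<in> E \<or> {x, b} \<in> E"
    and leaf_a: "\<And>x y. {x, a} \<in> E \<Longrightarrow> x \<noteq> b \<Longrightarrow> {x, y} \<in> E \<Longrightarrow> y = a"
    and leaf_b: "\<And>x y. {x, b} \<in> E \<Longrightarrow> x \<noteq> a \<Longrightarrow> {x, y} \<in> E \<Longrightarrow> y = b"
  obtain u' where u': "{u', a} \<in> E" "u' \<noteq> b" "u' \<noteq> u"
    using second_leaf[OF IR_graph ab near leaf_a u \<open>u \<noteq> b\<close>] .
  have ba: "{b, a} \<in> E" and vb: "{v, b} \<in> E"
    using ab v by (simp_all add: insert_commute)
  have near': "x = b \<or> x = a \<or> {x, b} \<in> E \<or> {x, a} \<in> E" if "x \<in> V" for x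
    using near[OF that] by blast
  obtain v' where v': "{v', b} \<in> E" "v' \<noteq> a" "v' \<noteq> v"
    using second_leaf[OF IR_graph ba near' leaf_b vb \<open>v \<noteq> a\<close>] .
  note S22 = double_star_S22[of a b u u' v v', OF ab _ _ u u'(1) \<open>u \<noteq> b\<close> u'(2) u'(3)[symmetric]
      vb v'(1) \<open>v \<noteq> a\<close> v'(2) v'(3)[symmetric]]
  show ?thesis
  proof (intro conjI impI)
    show "6 \<le> card V"
      by (rule S22(1)) (fact leaf_a leaf_b)+
    show "graph_iso V E S22_V S22_E" if "card V = 6"
      by (rule S22(2)) (fact leaf_a leaf_b that)+
  qed
qed

theorem proposition5p2:
  shows "is_IR_graph S22_V S22_E \<and>
    (\<forall>(V::'a set) E. tree V E \<and> diameter V E = 3 \<and> is_IR_graph V E \<longrightarrow>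
        card V \<ge> 6 \<and> (card V = 6 \<longrightarrow> graph_iso V E S22_V S22_E))"
  using is_IR_graph_S22 tree_graph.diameter_3_IR_graph[OF tree_graph.intro] by blast

end
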